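(* Let $(\mathfrak J,B)$ be a pseudo-euclidean Jordan algebra and $\omega$ a bilinear form on $\mathfrak J$. Then $\omega$ is a symplectic form on $\mathfrak J$ if and only if there exists an invertible $B$-antisymmetric derivation $D$ of $\mathfrak J$ such that $\omega(x,y)=B(D(x),y)$ for all $x,y\in\mathfrak J$. In particular $\mathfrak J$ admits a symplectic form iff it admits an invertible $B$-antisymmetric derivation.
   Context: All algebras are finite-dimensional over a field of characteristic zero. A Jordan algebra is a commutative algebra with $x(yx^2)=(xy)x^2$; $(\mathfrak J,B)$ is pseudo-euclidean if $B$ is nondegenerate, symmetric, with $B(xy,z)=B(x,yz)$. A symplectic form on $\mathfrak J$ is a nondegenerate skew-symmetric bilinear form $\omega$ with $\omega(xy,z)+\omega(yz,x)+\omega(zx,y)=0$ for all $x,y,z$. $D$ is $B$-antisymmetric if $B(Dx,y)=-B(x,Dy)$; a derivation satisfies $D(xy)=D(x)y+xD(y)$. *)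

theory Defs
  imports Main "HOL.Vector_Spaces"
begin

definition lin_map :: "('k::field \<Rightarrow> 'v::ab_group_add \<Rightarrow> 'v) \<Rightarrow> ('v \<Rightarrow> 'v) \<Rightarrow> bool" where
  "lin_map sc f \<longleftrightarrow> Vector_Spaces.linear sc sc f"

definition bilin_form :: "('k::field \<Rightarrow> 'v::ab_group_add \<Rightarrow> 'v) \<Rightarrow> ('v \<Rightarrow> 'v \<Rightarrow> 'k) \<Rightarrow> bool" where
  "bilin_form sc F \<longleftrightarrow> (\<forall>x. Vector_Spaces.linear sc (*) (F x)) \<and> (\<forall>y. Vector_Spaces.linear sc (*) (\<lambda>x. F x y))"

definition fd_algebra :: "('k::field \<Rightarrow> 'v::ab_group_add \<Rightarrow> 'v) \<Rightarrow> ('v \<Rightarrow> 'v \<Rightarrow> 'v) \<Rightarrow> bool" where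
  "fd_algebra sc mul \<longleftrightarrow> vector_space sc
     \<and> (\<exists>S. finite S \<and> module.span sc S = UNIV)
     \<and> (\<forall>x. lin_map sc (mul x)) \<and> (\<forall>y. lin_map sc (\<lambda>x. mul x y))"

definition jordan_algebra :: "('k::field \<Rightarrow> 'v::ab_group_add \<Rightarrow> 'v) \<Rightarrow> ('v \<Rightarrow> 'v \<Rightarrow> 'v) \<Rightarrow> bool" where
  "jordan_algebra sc mul \<longleftrightarrow> fd_algebra sc mul
     \<and> (\<forall>x y. mul x y = mul y x)
     \<and> (\<forall>x y. mul x (mul y (mul x x)) = mul (mul x y) (mul x x))"

definition pseudo_euclidean :: "('k::field \<Rightarrow> 'v::ab_group_add \<Rightarrow> 'v) \<Rightarrow> ('v \<Rightarrow> 'v \<Rightarrow> 'v) \<Rightarrow> ('v \<Rightarrow> 'v \<Rightarrow> 'k) \<Rightarrow> bool" where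
  "pseudo_euclidean sc mul B \<longleftrightarrow> jordan_algebra sc mul \<and> bilin_form sc B
     \<and> (\<forall>x y. B x y = B y x)
     \<and> (\<forall>x. (\<forall>y. B x y = 0) \<longrightarrow> x = 0)
     \<and> (\<forall>x y z. B (mul x y) z = B x (mul y z))"

definition symplectic_form :: "('k::field \<Rightarrow> 'v::ab_group_add \<Rightarrow> 'v) \<Rightarrow> ('v \<Rightarrow> 'v \<Rightarrow> 'v) \<Rightarrow> ('v \<Rightarrow> 'v \<Rightarrow> 'k) \<Rightarrow> bool" where
  "symplectic_form sc mul \<omega> \<longleftrightarrow> bilin_form sc \<omega>
     \<and> (\<forall>x y. \<omega> x y = - \<omega> y x)
     \<and> (\<forall>x. (\<forall>y. \<omega> x y = 0) \<longrightarrow> x = 0)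
     \<and> (\<forall>x y z. \<omega> (mul x y) z + \<omega> (mul y z) x + \<omega> (mul z x) y = 0)"

definition derivation :: "('k::field \<Rightarrow> 'v::ab_group_add \<Rightarrow> 'v) \<Rightarrow> ('v \<Rightarrow> 'v \<Rightarrow> 'v) \<Rightarrow> ('v \<Rightarrow> 'v) \<Rightarrow> bool" where
  "derivation sc mul D \<longleftrightarrow> lin_map sc D \<and> (\<forall>x y. D (mul x y) = mul (D x) y + mul x (D y))"

definition B_antisymmetric :: "('v \<Rightarrow> 'v \<Rightarrow> 'k::field) \<Rightarrow> ('v \<Rightarrow> 'v) \<Rightarrow> bool" where
  "B_antisymmetric B D \<longleftrightarrow> (\<forall>x y. B (D x) y = - B x (D y))"

end

theory Submission
  imports Defs
begin

text \<open>The correspondence is \<open>\<omega>(x,y) = B(D x, y)\<close>. Nondegeneracy of \<open>B\<close> on a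
finite-dimensional space makes every bilinear \<open>\<omega>\<close> of this form for a unique linear \<open>D\<close>;
skew-symmetry of \<open>\<omega>\<close> is then \<open>B\<close>-antisymmetry of \<open>D\<close>, nondegeneracy of \<open>\<omega>\<close> is
invertibility of \<open>D\<close>, and, using invariance and symmetry of \<open>B\<close> and commutativity of the
product, the cyclic identity for \<open>\<omega>\<close> is the Leibniz rule for \<open>D\<close> tested against \<open>B\<close>.\<close>

lemma bilin_form_left_add:
  "bilin_form sc F \<Longrightarrow> F (x + y) z = F x z + F y z"
  and bilin_form_left_scale:
  "bilin_form sc F \<Longrightarrow> F (sc c x) z = c * F x z"
  unfolding bilin_form_def linear_iff by auto

lemma bilin_form_left_diff:
  "bilin_form sc F \<Longrightarrow> F (x - y) z = F x z - F y z"
  by (metis bilin_form_left_add eq_diff_eq)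

lemma nondegenerate_left_cancel:
  assumes "bilin_form sc F" and "\<And>x. (\<forall>y. F x y = 0) \<Longrightarrow> x = 0"
    and "\<And>z. F a z = F b z"
  shows "a = b"
proof -
  have "\<forall>z. F (a - b) z = 0"
    using assms(3) by (simp add: bilin_form_left_diff[OF assms(1)])
  then show ?thesis using assms(2) by fastforce
qed

text \<open>Riesz representation: \<open>x \<mapsto> \<Sum>b\<in>T. F x b \<cdot> b\<close> over a basis \<open>T\<close> is injective by
nondegeneracy, hence surjective, and a preimage of \<open>\<Sum>b\<in>T. f b \<cdot> b\<close> represents \<open>f\<close>.\<close>

lemma nondegenerate_bilin_form_represents:
  fixes sc :: "'k::field \<Rightarrow> 'v::ab_group_add \<Rightarrow> 'v"
  assumes vs: "vector_space sc" and fin: "finite S" and span: "module.span sc S = UNIV"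
    and F: "bilin_form sc F" and nondeg: "\<And>x. (\<forall>y. F x y = 0) \<Longrightarrow> x = 0"
    and f: "Vector_Spaces.linear sc (*) f"
  shows "\<exists>a. \<forall>y. F a y = f y"
proof -
  interpret vector_space sc by fact
  interpret vp: vector_space_pair sc "(*) :: 'k \<Rightarrow> 'k \<Rightarrow> 'k"
    using vs f by (simp add: vector_space_pair_def linear_iff)
  obtain T where T: "T \<subseteq> S" "independent T" "S \<subseteq> span T"
    using maximal_independent_subset[of S] by blast
  have spanT: "span T = UNIV"
    using T span by (metis span_eq top_unique span_superset subset_trans)
  interpret fd: finite_dimensional_vector_space sc T
    by unfold_locales (use T fin finite_subset spanT in auto)
  have F_right: "\<And>x. Vector_Spaces.linear sc (*) (F x)"
    using F by (simp add: bilin_form_def)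
  have coeffs_zero: "\<And>c. (\<Sum>b\<in>T. sc (c b) b) = 0 \<Longrightarrow> \<forall>b\<in>T. c b = 0"
    using fd.independent_explicit T(2) by blast
  have agree_on_basis: "F a z = g z"
    if "Vector_Spaces.linear sc (*) g" "\<forall>b\<in>T. F a b = g b" for a g z
    using vp.linear_eq_on[OF F_right that(1), of z T] that(2) spanT by auto
  define E where "E x = (\<Sum>b\<in>T. sc (F x b) b)" for x
  have "Vector_Spaces.linear sc sc E"
    unfolding linear_iff E_def
    by (auto simp: vs bilin_form_left_add[OF F] bilin_form_left_scale[OF F]
        scale_left_distrib sum.distrib scale_sum_right)
  moreover have "inj E"
  proof (rule injI)
    fix x y assume "E x = E y"
    then have "(\<Sum>b\<in>T. sc (F (x - y) b) b) = 0"
      by (simp add: E_def bilin_form_left_diff[OF F] scale_left_diff_distrib sum_subtractf)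
    then have "\<forall>b\<in>T. F (x - y) b = 0" by (rule coeffs_zero)
    then have "\<forall>z. F (x - y) z = 0"
      using agree_on_basis[OF vp.linear_zero] by blast
    then show "x = y" using nondeg by fastforce
  qed
  ultimately have "surj E" by (rule fd.linear_inj_imp_surj)
  then obtain a where "E a = (\<Sum>b\<in>T. sc (f b) b)" by (metis surjD)
  then have "(\<Sum>b\<in>T. sc (F a b - f b) b) = 0"
    by (simp add: E_def scale_left_diff_distrib sum_subtractf)
  then have "\<forall>b\<in>T. F a b = f b"
    using coeffs_zero by fastforce
  then show ?thesis
    using agree_on_basis[OF f] by blast
qed

locale invariant_form_algebra =
  fixes sc :: "'k::field \<Rightarrow> 'v::ab_group_add \<Rightarrow> 'v"
    and mul :: "'v \<Rightarrow> 'v \<Rightarrow> 'v"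
    and B :: "'v \<Rightarrow> 'v \<Rightarrow> 'k"
  assumes vector_space: "vector_space sc"
    and finite_span: "\<exists>S. finite S \<and> module.span sc S = UNIV"
    and mul_commute: "\<And>x y. mul x y = mul y x"
    and bilin: "bilin_form sc B"
    and B_sym: "\<And>x y. B x y = B y x"
    and B_nondeg: "\<And>x. (\<forall>y. B x y = 0) \<Longrightarrow> x = 0"
    and B_invariant: "\<And>x y z. B (mul x y) z = B x (mul y z)"

lemma pseudo_euclidean_invariant_form_algebra:
  "pseudo_euclidean sc mul B \<Longrightarrow> invariant_form_algebra sc mul B"
  unfolding pseudo_euclidean_def jordan_algebra_def fd_algebra_def invariant_form_algebra_def
  by auto

context invariant_form_algebra
begin

lemma B_cancel: "(\<And>z. B a z = B b z) \<Longrightarrow> a = b"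
  using nondegenerate_left_cancel[OF bilin B_nondeg] .

lemma nondegenerate_represents:
  assumes "bilin_form sc F" and "\<And>x. (\<forall>y. F x y = 0) \<Longrightarrow> x = 0"
    and "Vector_Spaces.linear sc (*) f"
  shows "\<exists>a. \<forall>y. F a y = f y"
  using finite_span nondegenerate_bilin_form_represents[OF vector_space _ _ assms] by blast

lemma symplectic_form_of_derivation:
  assumes der: "derivation sc mul D" and inj: "inj D" and anti: "B_antisymmetric B D"
  shows "symplectic_form sc mul (\<lambda>x y. B (D x) y)"
proof -
  have D_linear: "Vector_Spaces.linear sc sc D"
    using der by (simp add: derivation_def lin_map_def)
  have D_leibniz: "\<And>x y. D (mul x y) = mul (D x) y + mul x (D y)"
    using der by (simp add: derivation_def)
  have D_anti: "\<And>x y. B (D x) y = - B x (D y)"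
    using anti by (simp add: B_antisymmetric_def)
  have "Vector_Spaces.linear sc (*) (\<lambda>x. B (D x) y)" for y
    using Vector_Spaces.linear_compose[OF D_linear, of _ "\<lambda>x. B x y"] bilin
    by (simp add: bilin_form_def o_def)
  then have "bilin_form sc (\<lambda>x y. B (D x) y)"
    using bilin by (simp add: bilin_form_def)
  moreover have "B (D x) y = - B (D y) x" for x y
    using D_anti[of x y] B_sym[of "D y" x] by simp
  moreover have "x = 0" if "\<forall>y. B (D x) y = 0" for x
  proof -
    have "D 0 = 0"
      using vector_space_pair.linear_0[OF _ D_linear] vector_space
      by (simp add: vector_space_pair_def)
    then have "D x = D 0"
      using B_nondeg that by simp
    then show "x = 0" using inj by (simp add: inj_eq)
  qed
  moreover have "B (D (mul x y)) z + B (D (mul y z)) x + B (D (mul z x)) y = 0" for x y z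
  proof -
    have "B (D (mul y z)) x = - B (D x) (mul y z)"
      using D_anti B_sym by metis
    also have "\<dots> = - B (mul (D x) y) z"
      by (simp only: B_invariant)
    finally have yz: "B (D (mul y z)) x = - B (mul (D x) y) z" .
    have "B (D (mul z x)) y = - B (D y) (mul x z)"
      using D_anti B_sym mul_commute by metis
    also have "\<dots> = - B (mul x (D y)) z"
      by (simp only: B_invariant[symmetric] mul_commute[of "D y" x])
    finally have zx: "B (D (mul z x)) y = - B (mul x (D y)) z" .
    have xy: "B (D (mul x y)) z = B (mul (D x) y) z + B (mul x (D y)) z"
      by (simp add: D_leibniz bilin_form_left_add[OF bilin])
    show ?thesis by (simp add: xy yz zx)
  qed
  ultimately show ?thesis
    unfolding symplectic_form_def by blast
qed

lemma derivation_of_symplectic_form: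
  assumes symp: "symplectic_form sc mul \<omega>"
  obtains D where "derivation sc mul D" "bij D" "B_antisymmetric B D" "\<And>x y. \<omega> x y = B (D x) y"
proof -
  have \<omega>: "bilin_form sc \<omega>" and \<omega>_skew: "\<And>x y. \<omega> x y = - \<omega> y x"
    and \<omega>_nondeg: "\<And>x. (\<forall>y. \<omega> x y = 0) \<Longrightarrow> x = 0"
    and \<omega>_cyclic: "\<And>x y z. \<omega> (mul x y) z + \<omega> (mul y z) x + \<omega> (mul z x) y = 0"
    using symp unfolding symplectic_form_def by blast+
  have "\<exists>a. \<forall>y. B a y = \<omega> x y" for x
    using \<omega> unfolding bilin_form_def by (blast intro: nondegenerate_represents[OF bilin B_nondeg])
  then obtain D where DB: "\<And>x y. B (D x) y = \<omega> x y" by metis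
  have "Vector_Spaces.linear sc sc D"
    unfolding linear_iff
  proof (intro conjI allI vector_space)
    fix x y show "D (x + y) = D x + D y"
      by (rule B_cancel) (simp add: DB bilin_form_left_add[OF bilin] bilin_form_left_add[OF \<omega>])
  next
    fix c x show "D (sc c x) = sc c (D x)"
      by (rule B_cancel) (simp add: DB bilin_form_left_scale[OF bilin] bilin_form_left_scale[OF \<omega>])
  qed
  moreover have "D (mul x y) = mul (D x) y + mul x (D y)" for x y
  proof (rule B_cancel)
    fix z
    have "B (D (mul x y)) z = - (\<omega> (mul y z) x + \<omega> (mul z x) y)"
      using \<omega>_cyclic[of x y z] by (simp only: DB eq_neg_iff_add_eq_0 add.assoc)
    also have "\<dots> = B (D x) (mul y z) + B (D y) (mul x z)"
      using \<omega>_skew[of "mul y z" x] \<omega>_skew[of "mul z x" y] by (simp add: DB mul_commute)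
    also have "\<dots> = B (mul (D x) y + mul x (D y)) z"
      by (simp add: bilin_form_left_add[OF bilin] B_invariant mul_commute[of x "D y"])
    finally show "B (D (mul x y)) z = B (mul (D x) y + mul x (D y)) z" .
  qed
  ultimately have "derivation sc mul D"
    by (simp add: derivation_def lin_map_def)
  moreover have "inj D"
  proof (rule injI)
    fix x y assume "D x = D y"
    then have "\<forall>z. \<omega> (x - y) z = 0"
      unfolding bilin_form_left_diff[OF \<omega>] by (simp flip: DB)
    then show "x = y" using \<omega>_nondeg by fastforce
  qed
  moreover have "surj D"
  proof -
    have "y \<in> range D" for y
    proof -
      obtain a where "\<forall>z. \<omega> a z = B y z"
        using nondegenerate_represents[OF \<omega> \<omega>_nondeg, of "B y"] bilin by (auto simp: bilin_form_def)
      then have "D a = y" by (intro B_cancel) (simp add: DB)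
      then show ?thesis by blast
    qed
    then show ?thesis by blast
  qed
  moreover have "B_antisymmetric B D"
    unfolding B_antisymmetric_def by (metis DB B_sym \<omega>_skew)
  ultimately show thesis
    using that DB by (simp add: bij_def)
qed

lemma symplectic_form_iff_derivation:
  "symplectic_form sc mul \<omega> \<longleftrightarrow>
     (\<exists>D. derivation sc mul D \<and> bij D \<and> B_antisymmetric B D \<and> (\<forall>x y. \<omega> x y = B (D x) y))"
proof
  assume "symplectic_form sc mul \<omega>"
  then show "\<exists>D. derivation sc mul D \<and> bij D \<and> B_antisymmetric B D \<and> (\<forall>x y. \<omega> x y = B (D x) y)"
    by (rule derivation_of_symplectic_form) blast
next
  assume "\<exists>D. derivation sc mul D \<and> bij D \<and> B_antisymmetric B D \<and> (\<forall>x y. \<omega> x y = B (D x) y)"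
  then obtain D where "derivation sc mul D" "bij D" "B_antisymmetric B D"
    and "\<omega> = (\<lambda>x y. B (D x) y)" by blast
  then show "symplectic_form sc mul \<omega>"
    using symplectic_form_of_derivation bij_is_inj by blast
qed

end

theorem mainTheorem8:
  fixes sc :: "'k::field_char_0 \<Rightarrow> 'v::ab_group_add \<Rightarrow> 'v"
    and mul :: "'v \<Rightarrow> 'v \<Rightarrow> 'v"
    and B \<omega> :: "'v \<Rightarrow> 'v \<Rightarrow> 'k"
  assumes "pseudo_euclidean sc mul B"
    and "bilin_form sc \<omega>"
  shows "(symplectic_form sc mul \<omega> \<longleftrightarrow>
           (\<exists>D. derivation sc mul D \<and> bij D \<and> B_antisymmetric B D
                \<and> (\<forall>x y. \<omega> x y = B (D x) y)))
         \<and> ((\<exists>\<omega>'. symplectic_form sc mul \<omega>') \<longleftrightarrow>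
           (\<exists>D. derivation sc mul D \<and> bij D \<and> B_antisymmetric B D))"
proof -
  interpret invariant_form_algebra sc mul B
    using assms(1) by (rule pseudo_euclidean_invariant_form_algebra)
  show ?thesis
  proof (intro conjI symplectic_form_iff_derivation iffI)
    assume "\<exists>\<omega>'. symplectic_form sc mul \<omega>'"
    then obtain \<omega>' where "symplectic_form sc mul \<omega>'" ..
    then show "\<exists>D. derivation sc mul D \<and> bij D \<and> B_antisymmetric B D"
      by (rule derivation_of_symplectic_form) blast
  next
    assume "\<exists>D. derivation sc mul D \<and> bij D \<and> B_antisymmetric B D"
    then obtain D where "derivation sc mul D" "bij D" "B_antisymmetric B D" by blast
    then show "\<exists>\<omega>'. symplectic_form sc mul \<omega>'"
      using symplectic_form_of_derivation bij_is_inj by blast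
  qed
qed

end
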